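(* Let $M$ be a quasi-minimal Lorentz surface in the pseudo-Euclidean space $\mathbb{E}^4_2$. If $M$ has parallel mean curvature vector field, then $M$ has flat normal connection.
   Context: $\mathbb{E}^4_2$ is $\mathbb{R}^4$ with the metric $\langle\cdot,\cdot\rangle = dx_1^2+dx_2^2-dx_3^2-dx_4^2$. A Lorentz surface in $\mathbb{E}^4_2$ is an immersed surface whose induced metric is Lorentzian (signature $(1,1)$); its normal bundle then also carries a metric of signature $(1,1)$. Let $h$ be the second fundamental form, $D$ the normal connection and $H=\frac12\operatorname{tr}h$ the mean curvature vector field. The surface is quasi-minimal if $H$ is lightlike at every point, i.e. $H\neq 0$ and $\langle H,H\rangle=0$. The mean curvature vector field is parallel if $DH=0$ identically. The normal connection is flat if the curvature tensor of $D$ vanishes identically (equivalently, the normal curvature $\varkappa$ vanishes). *)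

theory Defs
  imports "HOL-Analysis.Analysis"
begin

fun Ck_on :: "nat \<Rightarrow> 'a::euclidean_space set \<Rightarrow> ('a \<Rightarrow> 'b::real_normed_vector) \<Rightarrow> bool" where
  "Ck_on 0 U f = continuous_on U f"
| "Ck_on (Suc k) U f = (f differentiable_on U \<and>
     (\<forall>i\<in>Basis. Ck_on k U (\<lambda>p. frechet_derivative f (at p) i)))"

definition smooth_on :: "'a::euclidean_space set \<Rightarrow> ('a \<Rightarrow> 'b::real_normed_vector) \<Rightarrow> bool" where
  "smooth_on U f \<longleftrightarrow> (\<forall>k. Ck_on k U f)"

definition ip :: "real^4 \<Rightarrow> real^4 \<Rightarrow> real" where
  "ip w z = w$1 * z$1 + w$2 * z$2 - w$3 * z$3 - w$4 * z$4"

definition Du :: "(real \<times> real \<Rightarrow> 'b::real_normed_vector) \<Rightarrow> real \<times> real \<Rightarrow> 'b" where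
  "Du f p = frechet_derivative f (at p) (1, 0)"

definition Dv :: "(real \<times> real \<Rightarrow> 'b::real_normed_vector) \<Rightarrow> real \<times> real \<Rightarrow> 'b" where
  "Dv f p = frechet_derivative f (at p) (0, 1)"

definition g11 :: "(real \<times> real \<Rightarrow> real^4) \<Rightarrow> real \<times> real \<Rightarrow> real" where
  "g11 x p = ip (Du x p) (Du x p)"
definition g12 :: "(real \<times> real \<Rightarrow> real^4) \<Rightarrow> real \<times> real \<Rightarrow> real" where
  "g12 x p = ip (Du x p) (Dv x p)"
definition g22 :: "(real \<times> real \<Rightarrow> real^4) \<Rightarrow> real \<times> real \<Rightarrow> real" where
  "g22 x p = ip (Dv x p) (Dv x p)"
definition gdet :: "(real \<times> real \<Rightarrow> real^4) \<Rightarrow> real \<times> real \<Rightarrow> real" where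
  "gdet x p = g11 x p * g22 x p - (g12 x p)^2"

definition gi11 :: "(real \<times> real \<Rightarrow> real^4) \<Rightarrow> real \<times> real \<Rightarrow> real" where
  "gi11 x p = g22 x p / gdet x p"
definition gi12 :: "(real \<times> real \<Rightarrow> real^4) \<Rightarrow> real \<times> real \<Rightarrow> real" where
  "gi12 x p = - g12 x p / gdet x p"
definition gi22 :: "(real \<times> real \<Rightarrow> real^4) \<Rightarrow> real \<times> real \<Rightarrow> real" where
  "gi22 x p = g11 x p / gdet x p"

text \<open>A Lorentz surface patch: smooth immersion of an open parameter domain whose
  induced metric has signature (1,1) (equivalently, negative determinant).\<close>
definition lorentz_surface :: "(real \<times> real \<Rightarrow> real^4) \<Rightarrow> (real \<times> real) set \<Rightarrow> bool" where
  "lorentz_surface x U \<longleftrightarrow> open U \<and> smooth_on U x \<and>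
     (\<forall>p\<in>U. (\<forall>a b. a *\<^sub>R Du x p + b *\<^sub>R Dv x p = 0 \<longrightarrow> a = 0 \<and> b = 0) \<and> gdet x p < 0)"

definition tanp :: "(real \<times> real \<Rightarrow> real^4) \<Rightarrow> real \<times> real \<Rightarrow> real^4 \<Rightarrow> real^4" where
  "tanp x p w =
     (gi11 x p * ip w (Du x p) + gi12 x p * ip w (Dv x p)) *\<^sub>R Du x p +
     (gi12 x p * ip w (Du x p) + gi22 x p * ip w (Dv x p)) *\<^sub>R Dv x p"

definition norp :: "(real \<times> real \<Rightarrow> real^4) \<Rightarrow> real \<times> real \<Rightarrow> real^4 \<Rightarrow> real^4" where
  "norp x p w = w - tanp x p w"

text \<open>Second fundamental form in coordinates: h_ij = (x_ij)^normal.\<close>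
definition h11 :: "(real \<times> real \<Rightarrow> real^4) \<Rightarrow> real \<times> real \<Rightarrow> real^4" where
  "h11 x p = norp x p (Du (Du x) p)"
definition h12 :: "(real \<times> real \<Rightarrow> real^4) \<Rightarrow> real \<times> real \<Rightarrow> real^4" where
  "h12 x p = norp x p (Dv (Du x) p)"
definition h22 :: "(real \<times> real \<Rightarrow> real^4) \<Rightarrow> real \<times> real \<Rightarrow> real^4" where
  "h22 x p = norp x p (Dv (Dv x) p)"

definition meancurv :: "(real \<times> real \<Rightarrow> real^4) \<Rightarrow> real \<times> real \<Rightarrow> real^4" where
  "meancurv x p = (1/2) *\<^sub>R (gi11 x p *\<^sub>R h11 x p + (2 * gi12 x p) *\<^sub>R h12 x p
                              + gi22 x p *\<^sub>R h22 x p)"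

text \<open>Normal connection D along the coordinate fields: D_{x_u} xi = (xi_u)^normal.\<close>
definition Dnu :: "(real \<times> real \<Rightarrow> real^4) \<Rightarrow> (real \<times> real \<Rightarrow> real^4) \<Rightarrow> real \<times> real \<Rightarrow> real^4" where
  "Dnu x \<xi> p = norp x p (Du \<xi> p)"
definition Dnv :: "(real \<times> real \<Rightarrow> real^4) \<Rightarrow> (real \<times> real \<Rightarrow> real^4) \<Rightarrow> real \<times> real \<Rightarrow> real^4" where
  "Dnv x \<xi> p = norp x p (Dv \<xi> p)"

text \<open>Curvature of the normal connection: R^D(x_u,x_v) xi = D_u D_v xi - D_v D_u xi
  (the coordinate fields commute, so no bracket term).\<close>
definition RD :: "(real \<times> real \<Rightarrow> real^4) \<Rightarrow> (real \<times> real \<Rightarrow> real^4) \<Rightarrow> real \<times> real \<Rightarrow> real^4" where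
  "RD x \<xi> p = Dnu x (Dnv x \<xi>) p - Dnv x (Dnu x \<xi>) p"

definition normal_field :: "(real \<times> real \<Rightarrow> real^4) \<Rightarrow> (real \<times> real) set \<Rightarrow> (real \<times> real \<Rightarrow> real^4) \<Rightarrow> bool" where
  "normal_field x U \<xi> \<longleftrightarrow> smooth_on U \<xi> \<and> (\<forall>p\<in>U. norp x p (\<xi> p) = \<xi> p)"

definition quasi_minimal :: "(real \<times> real \<Rightarrow> real^4) \<Rightarrow> (real \<times> real) set \<Rightarrow> bool" where
  "quasi_minimal x U \<longleftrightarrow> (\<forall>p\<in>U. meancurv x p \<noteq> 0 \<and> ip (meancurv x p) (meancurv x p) = 0)"

definition parallel_mean_curvature :: "(real \<times> real \<Rightarrow> real^4) \<Rightarrow> (real \<times> real) set \<Rightarrow> bool" where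
  "parallel_mean_curvature x U \<longleftrightarrow>
     (\<forall>p\<in>U. Dnu x (meancurv x) p = 0 \<and> Dnv x (meancurv x) p = 0)"

definition flat_normal_connection :: "(real \<times> real \<Rightarrow> real^4) \<Rightarrow> (real \<times> real) set \<Rightarrow> bool" where
  "flat_normal_connection x U \<longleftrightarrow>
     (\<forall>\<xi>. normal_field x U \<xi> \<longrightarrow> (\<forall>p\<in>U. RD x \<xi> p = 0))"

end

theory Submission
  imports Defs
begin

text \<open>At each point the normal plane is a Lorentzian plane containing the null vector \<open>H\<close>, so it
  is spanned by \<open>H\<close> and any normal vector \<open>\<eta>\<close> with \<open>\<langle>H, \<eta>\<rangle> \<noteq> 0\<close>; a normal vector orthogonal
  to both must vanish. Differentiating \<open>\<langle>\<xi>, \<eta>\<rangle>\<close> twice and using the symmetry of mixed partials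
  shows that the normal curvature operator \<open>R\<^sup>D\<close> is skew-adjoint, and \<open>R\<^sup>D H = 0\<close> because
  \<open>H\<close> is parallel. Hence \<open>\<langle>R\<^sup>D \<xi>, H\<rangle> = -\<langle>\<xi>, R\<^sup>D H\<rangle> = 0\<close> for every normal field \<open>\<xi>\<close>;
  together with \<open>\<langle>R\<^sup>D \<eta>, \<eta>\<rangle> = 0\<close> this gives \<open>R\<^sup>D \<eta> = 0\<close>, and then
  \<open>\<langle>R\<^sup>D \<xi>, \<eta>\<rangle> = -\<langle>\<xi>, R\<^sup>D \<eta>\<rangle> = 0\<close> forces \<open>R\<^sup>D \<xi> = 0\<close>.\<close>

lemma frechet_derivative_cong_open:
  assumes "open U" "p \<in> U" "\<And>q. q \<in> U \<Longrightarrow> f q = g q"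
  shows "frechet_derivative f (at p) = frechet_derivative g (at p)"
proof -
  have "(f has_derivative f') (at p) \<longleftrightarrow> (g has_derivative f') (at p)" for f'
    using assms has_derivative_transform_within_open[of f _ p UNIV U g]
      has_derivative_transform_within_open[of g _ p UNIV U f] by auto
  then show ?thesis unfolding frechet_derivative_def by simp
qed

lemma differentiable_on_cong_open:
  assumes "open U" "\<And>q. q \<in> U \<Longrightarrow> f q = g q"
  shows "f differentiable_on U \<longleftrightarrow> g differentiable_on U"
proof -
  have "(f has_derivative D) (at p) \<longleftrightarrow> (g has_derivative D) (at p)" if "p \<in> U" for D p
    using assms that has_derivative_transform_within_open[of f D p UNIV U g]
      has_derivative_transform_within_open[of g D p UNIV U f] by auto
  then show ?thesis
    unfolding differentiable_on_eq_differentiable_at[OF assms(1)] differentiable_def by blast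
qed

lemma frechet_derivative_add:
  assumes "f differentiable (at p)" "g differentiable (at p)"
  shows "frechet_derivative (\<lambda>q. f q + g q) (at p) h =
    frechet_derivative f (at p) h + frechet_derivative g (at p) h"
  by (simp add: frechet_derivative_at[OF
        has_derivative_add[OF assms[unfolded frechet_derivative_works]], symmetric])

lemma frechet_derivative_bilinear:
  assumes "bounded_bilinear bil" "f differentiable (at p)" "g differentiable (at p)"
  shows "frechet_derivative (\<lambda>q. bil (f q) (g q)) (at p) h =
    bil (f p) (frechet_derivative g (at p) h) + bil (frechet_derivative f (at p) h) (g p)"
  by (simp add: frechet_derivative_at[OF bounded_bilinear.FDERIV[OF assms(1)
        assms(2,3)[unfolded frechet_derivative_works]], symmetric])

lemma differentiable_bilinear:
  assumes "bounded_bilinear bil" "f differentiable (at p)" "g differentiable (at p)"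
  shows "(\<lambda>q. bil (f q) (g q)) differentiable (at p)"
  using bounded_bilinear.FDERIV[OF assms(1) assms(2,3)[unfolded frechet_derivative_works]]
  unfolding differentiable_def by blast

lemma frechet_derivative_inverse:
  fixes f :: "'a::real_normed_vector \<Rightarrow> real"
  assumes "f differentiable (at p)" "f p \<noteq> 0"
  shows "frechet_derivative (\<lambda>q. inverse (f q)) (at p) h =
    - (inverse (f p) * frechet_derivative f (at p) h * inverse (f p))"
  by (simp add: frechet_derivative_at[OF Deriv.has_derivative_inverse[OF assms(2)
        assms(1)[unfolded frechet_derivative_works]], symmetric])

lemma Ck_on_cong:
  assumes "open U" "\<And>p. p \<in> U \<Longrightarrow> f p = g p"
  shows "Ck_on k U f = Ck_on k U g"
  using assms(2)
proof (induction k arbitrary: f g)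
  case 0
  then show ?case by (simp cong: continuous_on_cong)
next
  case (Suc k)
  have "Ck_on k U (\<lambda>p. frechet_derivative f (at p) i) = Ck_on k U (\<lambda>p. frechet_derivative g (at p) i)"
    for i
    by (intro Suc.IH) (simp add: frechet_derivative_cong_open[OF assms(1) _ Suc.prems])
  then show ?case
    using differentiable_on_cong_open[OF assms(1) Suc.prems] by simp
qed

lemma Ck_on_SucD: "Ck_on (Suc k) U f \<Longrightarrow> Ck_on k U f"
  by (induction k arbitrary: f) (auto simp: differentiable_imp_continuous_on)

lemma Ck_on_const: "Ck_on k U (\<lambda>p. c)"
  by (induction k arbitrary: c) simp_all

lemma Ck_on_differentiable:
  "open U \<Longrightarrow> p \<in> U \<Longrightarrow> Ck_on (Suc k) U f \<Longrightarrow> f differentiable (at p)"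
  by (simp add: differentiable_on_eq_differentiable_at)

lemma Ck_on_SucI:
  assumes "open U" "f differentiable_on U"
    and "\<And>i. i \<in> Basis \<Longrightarrow> Ck_on k U (g i)"
    and "\<And>i p. i \<in> Basis \<Longrightarrow> p \<in> U \<Longrightarrow> frechet_derivative f (at p) i = g i p"
  shows "Ck_on (Suc k) U f"
proof -
  have "Ck_on k U (\<lambda>p. frechet_derivative f (at p) i)" if "i \<in> Basis" for i
    using Ck_on_cong[OF assms(1), of "\<lambda>p. frechet_derivative f (at p) i" "g i" k] assms(3,4) that
    by simp
  then show ?thesis using assms(2) by simp
qed

lemma Ck_on_add:
  assumes "open U"
  shows "Ck_on k U f \<Longrightarrow> Ck_on k U g \<Longrightarrow> Ck_on k U (\<lambda>p. f p + g p)"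
proof (induction k arbitrary: f g)
  case 0
  then show ?case by (simp add: continuous_on_add)
next
  case (Suc k)
  show ?case
    by (rule Ck_on_SucI[OF assms, where g = "\<lambda>i p. frechet_derivative f (at p) i + frechet_derivative g (at p) i"])
      (use Suc in \<open>auto intro!: frechet_derivative_add Ck_on_differentiable[OF assms]\<close>)
qed

lemma Ck_on_bilinear:
  assumes "open U" "bounded_bilinear bil"
  shows "Ck_on k U f \<Longrightarrow> Ck_on k U g \<Longrightarrow> Ck_on k U (\<lambda>p. bil (f p) (g p))"
proof (induction k arbitrary: f g)
  case 0
  then show ?case using bounded_bilinear.continuous_on[OF assms(2)] by simp
next
  case (Suc k)
  have df: "f differentiable (at p)" and dg: "g differentiable (at p)" if "p \<in> U" for p
    using Ck_on_differentiable[OF assms(1) that] Suc.prems by blast+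
  have f: "Ck_on k U f" and g: "Ck_on k U g" using Suc.prems Ck_on_SucD by blast+
  show ?case
  proof (rule Ck_on_SucI[OF assms(1)])
    show "(\<lambda>p. bil (f p) (g p)) differentiable_on U"
      using differentiable_bilinear[OF assms(2) df dg]
      by (simp add: differentiable_on_eq_differentiable_at[OF assms(1)])
    show "Ck_on k U (\<lambda>p. bil (f p) (frechet_derivative g (at p) i)
                        + bil (frechet_derivative f (at p) i) (g p))" if "i \<in> Basis" for i
      using Suc.prems that by (intro Ck_on_add[OF assms(1)] Suc.IH f g) simp_all
    show "frechet_derivative (\<lambda>p. bil (f p) (g p)) (at p) i =
          bil (f p) (frechet_derivative g (at p) i) + bil (frechet_derivative f (at p) i) (g p)"
      if "p \<in> U" for i p
      by (rule frechet_derivative_bilinear[OF assms(2) df[OF that] dg[OF that]])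
  qed
qed

lemma Ck_on_uminus:
  assumes "open U" "Ck_on k U f"
  shows "Ck_on k U (\<lambda>p. - f p)"
  using Ck_on_bilinear[OF assms(1) bounded_bilinear_scaleR Ck_on_const assms(2), of "-1"] by simp

lemma Ck_on_inverse:
  fixes f :: "'a::euclidean_space \<Rightarrow> real"
  assumes "open U" "\<And>p. p \<in> U \<Longrightarrow> f p \<noteq> 0"
  shows "Ck_on k U f \<Longrightarrow> Ck_on k U (\<lambda>p. inverse (f p))"
proof (induction k)
  case 0
  then show ?case using assms(2) by (auto intro: continuous_on_inverse)
next
  case (Suc k)
  have df: "f differentiable (at p)" if "p \<in> U" for p
    using Ck_on_differentiable[OF assms(1) that] Suc.prems by blast
  have inv: "Ck_on k U (\<lambda>p. inverse (f p))" using Suc.IH Suc.prems Ck_on_SucD by blast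
  show ?case
  proof (rule Ck_on_SucI[OF assms(1)])
    show "(\<lambda>p. inverse (f p)) differentiable_on U"
      using differentiable_inverse[OF df assms(2)]
      by (simp add: differentiable_on_eq_differentiable_at[OF assms(1)])
    show "Ck_on k U (\<lambda>p. - (inverse (f p) * frechet_derivative f (at p) i * inverse (f p)))"
      if "i \<in> Basis" for i
      using Suc.prems that
      by (intro Ck_on_uminus[OF assms(1)] Ck_on_bilinear[OF assms(1) bounded_bilinear_mult] inv) simp
    show "frechet_derivative (\<lambda>p. inverse (f p)) (at p) i =
          - (inverse (f p) * frechet_derivative f (at p) i * inverse (f p))" if "p \<in> U" for i p
      by (rule frechet_derivative_inverse[OF df[OF that] assms(2)[OF that]])
  qed
qed

lemma smooth_on_Ck_on: "smooth_on U f \<Longrightarrow> Ck_on k U f"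
  by (simp add: smooth_on_def)

lemma smooth_on_differentiable: "open U \<Longrightarrow> p \<in> U \<Longrightarrow> smooth_on U f \<Longrightarrow> f differentiable (at p)"
  by (rule Ck_on_differentiable[OF _ _ smooth_on_Ck_on[of U f "Suc 0"]])

lemma smooth_on_const: "smooth_on U (\<lambda>p. c)"
  by (simp add: smooth_on_def Ck_on_const)

lemma smooth_on_add: "open U \<Longrightarrow> smooth_on U f \<Longrightarrow> smooth_on U g \<Longrightarrow> smooth_on U (\<lambda>p. f p + g p)"
  by (simp add: smooth_on_def Ck_on_add)

lemma smooth_on_uminus: "open U \<Longrightarrow> smooth_on U f \<Longrightarrow> smooth_on U (\<lambda>p. - f p)"
  by (simp add: smooth_on_def Ck_on_uminus)

lemma smooth_on_diff: "open U \<Longrightarrow> smooth_on U f \<Longrightarrow> smooth_on U g \<Longrightarrow> smooth_on U (\<lambda>p. f p - g p)"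
  using smooth_on_add[of U f "\<lambda>p. - g p"] smooth_on_uminus[of U g] by simp

lemma smooth_on_bilinear:
  "open U \<Longrightarrow> bounded_bilinear bil \<Longrightarrow> smooth_on U f \<Longrightarrow> smooth_on U g \<Longrightarrow>
    smooth_on U (\<lambda>p. bil (f p) (g p))"
  by (simp add: smooth_on_def Ck_on_bilinear)

lemma smooth_on_mult:
  fixes f g :: "'a::euclidean_space \<Rightarrow> 'b::real_normed_algebra"
  shows "open U \<Longrightarrow> smooth_on U f \<Longrightarrow> smooth_on U g \<Longrightarrow> smooth_on U (\<lambda>p. f p * g p)"
  by (rule smooth_on_bilinear[OF _ bounded_bilinear_mult])

lemma smooth_on_scaleR:
  fixes f :: "'a::euclidean_space \<Rightarrow> real" and g :: "'a \<Rightarrow> 'b::real_normed_vector"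
  shows "open U \<Longrightarrow> smooth_on U f \<Longrightarrow> smooth_on U g \<Longrightarrow> smooth_on U (\<lambda>p. f p *\<^sub>R g p)"
  by (rule smooth_on_bilinear[OF _ bounded_bilinear_scaleR])

lemma smooth_on_divide:
  fixes f g :: "'a::euclidean_space \<Rightarrow> real"
  assumes "open U" "\<And>p. p \<in> U \<Longrightarrow> g p \<noteq> 0" "smooth_on U f" "smooth_on U g"
  shows "smooth_on U (\<lambda>p. f p / g p)"
proof -
  have "smooth_on U (\<lambda>p. inverse (g p))"
    using Ck_on_inverse[OF assms(1,2)] assms(4) by (simp add: smooth_on_def)
  then show ?thesis
    using smooth_on_mult[OF assms(1,3)] by (simp add: divide_inverse)
qed

lemma smooth_on_partial:
  assumes "smooth_on U f" "i \<in> Basis"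
  shows "smooth_on U (\<lambda>p. frechet_derivative f (at p) i)"
  unfolding smooth_on_def
proof
  fix k
  show "Ck_on k U (\<lambda>p. frechet_derivative f (at p) i)"
    using assms smooth_on_Ck_on[of U f "Suc k"] by simp
qed

lemma smooth_on_Du: "smooth_on U f \<Longrightarrow> smooth_on U (Du f)"
  using smooth_on_partial[of U f "(1, 0)"] unfolding Du_def by (simp add: Basis_prod_def)

lemma smooth_on_Dv: "smooth_on U f \<Longrightarrow> smooth_on U (Dv f)"
  using smooth_on_partial[of U f "(0, 1)"] unfolding Dv_def by (simp add: Basis_prod_def)

section \<open>Symmetry of mixed partial derivatives\<close>

lemma has_real_derivative_Du:
  fixes g :: "real \<times> real \<Rightarrow> real"
  assumes "g differentiable (at (s, t))"
  shows "((\<lambda>r. g (r, t)) has_real_derivative Du g (s, t)) (at s)"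
proof -
  let ?L = "frechet_derivative g (at (s, t))"
  have "((\<lambda>r. (r, t)) has_derivative (\<lambda>h. (h, 0))) (at s)"
    by (auto intro!: derivative_eq_intros)
  from has_derivative_compose[OF this assms[unfolded frechet_derivative_works]]
  have "((\<lambda>r. g (r, t)) has_derivative (\<lambda>h. ?L (h, 0))) (at s)" .
  moreover have "?L (h, 0) = Du g (s, t) * h" for h
    using linear_cmul[OF linear_frechet_derivative[OF assms], of h "(1, 0)"]
    by (simp add: Du_def)
  ultimately show ?thesis by (simp add: has_field_derivative_def)
qed

lemma has_real_derivative_Dv:
  fixes g :: "real \<times> real \<Rightarrow> real"
  assumes "g differentiable (at (s, t))"
  shows "((\<lambda>r. g (s, r)) has_real_derivative Dv g (s, t)) (at t)"
proof -
  let ?L = "frechet_derivative g (at (s, t))"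
  have "((\<lambda>r. (s, r)) has_derivative (\<lambda>h. (0, h))) (at t)"
    by (auto intro!: derivative_eq_intros)
  from has_derivative_compose[OF this assms[unfolded frechet_derivative_works]]
  have "((\<lambda>r. g (s, r)) has_derivative (\<lambda>h. ?L (0, h))) (at t)" .
  moreover have "?L (0, h) = Dv g (s, t) * h" for h
    using linear_cmul[OF linear_frechet_derivative[OF assms], of h "(0, 1)"]
    by (simp add: Dv_def)
  ultimately show ?thesis by (simp add: has_field_derivative_def)
qed

lemma second_difference_Dv_Du:
  fixes f :: "real \<times> real \<Rightarrow> real"
  assumes "open U" "smooth_on U f" "h > 0"
    and square: "\<And>r t. a \<le> r \<Longrightarrow> r \<le> a + h \<Longrightarrow> b \<le> t \<Longrightarrow> t \<le> b + h \<Longrightarrow> (r, t) \<in> U"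
  obtains r t where "a < r" "r < a + h" "b < t" "t < b + h"
    "f (a + h, b + h) - f (a + h, b) - f (a, b + h) + f (a, b) = h * h * Dv (Du f) (r, t)"
proof -
  have df: "f differentiable (at q)" and dDu: "Du f differentiable (at q)" if "q \<in> U" for q
    using smooth_on_differentiable[OF assms(1) that] assms(2) smooth_on_Du by blast+
  obtain r where r: "a < r" "r < a + h"
    "(f (a + h, b + h) - f (a + h, b)) - (f (a, b + h) - f (a, b)) = h * (Du f (r, b + h) - Du f (r, b))"
    using MVT2[of a "a + h" "\<lambda>r. f (r, b + h) - f (r, b)" "\<lambda>r. Du f (r, b + h) - Du f (r, b)"]
      assms(3) square df by (force intro!: DERIV_diff has_real_derivative_Du)
  obtain t where "b < t" "t < b + h" "Du f (r, b + h) - Du f (r, b) = h * Dv (Du f) (r, t)"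
    using MVT2[of b "b + h" "\<lambda>t. Du f (r, t)" "\<lambda>t. Dv (Du f) (r, t)"]
      assms(3) square r dDu by (force intro!: has_real_derivative_Dv)
  with r that show ?thesis by (simp add: algebra_simps)
qed

lemma second_difference_Du_Dv:
  fixes f :: "real \<times> real \<Rightarrow> real"
  assumes "open U" "smooth_on U f" "h > 0"
    and square: "\<And>r t. a \<le> r \<Longrightarrow> r \<le> a + h \<Longrightarrow> b \<le> t \<Longrightarrow> t \<le> b + h \<Longrightarrow> (r, t) \<in> U"
  obtains r t where "a < r" "r < a + h" "b < t" "t < b + h"
    "f (a + h, b + h) - f (a + h, b) - f (a, b + h) + f (a, b) = h * h * Du (Dv f) (r, t)"
proof -
  have df: "f differentiable (at q)" and dDv: "Dv f differentiable (at q)" if "q \<in> U" for q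
    using smooth_on_differentiable[OF assms(1) that] assms(2) smooth_on_Dv by blast+
  obtain t where t: "b < t" "t < b + h"
    "(f (a + h, b + h) - f (a, b + h)) - (f (a + h, b) - f (a, b)) = h * (Dv f (a + h, t) - Dv f (a, t))"
    using MVT2[of b "b + h" "\<lambda>t. f (a + h, t) - f (a, t)" "\<lambda>t. Dv f (a + h, t) - Dv f (a, t)"]
      assms(3) square df by (force intro!: DERIV_diff has_real_derivative_Dv)
  obtain r where "a < r" "r < a + h" "Dv f (a + h, t) - Dv f (a, t) = h * Du (Dv f) (r, t)"
    using MVT2[of a "a + h" "\<lambda>r. Dv f (r, t)" "\<lambda>r. Du (Dv f) (r, t)"]
      assms(3) square t dDv by (force intro!: has_real_derivative_Du)
  with t that show ?thesis by (simp add: algebra_simps)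
qed

lemma Dv_Du_eq_Du_Dv:
  fixes f :: "real \<times> real \<Rightarrow> real"
  assumes "open U" "p \<in> U" "smooth_on U f"
  shows "Dv (Du f) p = Du (Dv f) p"
proof (rule ccontr)
  assume ne: "Dv (Du f) p \<noteq> Du (Dv f) p"
  obtain a b where p: "p = (a, b)" by fastforce
  define e where "e = \<bar>Dv (Du f) p - Du (Dv f) p\<bar> / 2"
  have "e > 0" using ne by (simp add: e_def)
  have "continuous_on U (Dv (Du f))" "continuous_on U (Du (Dv f))"
    using smooth_on_Ck_on[of U _ 0] smooth_on_Du smooth_on_Dv assms(3) by (metis Ck_on.simps(1))+
  then have "isCont (Dv (Du f)) p" "isCont (Du (Dv f)) p"
    using assms(1,2) continuous_on_eq_continuous_at by blast+
  then obtain d1 d2 where "d1 > 0" "d2 > 0"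
    and d1: "\<And>q. dist q p < d1 \<Longrightarrow> \<bar>Dv (Du f) q - Dv (Du f) p\<bar> < e"
    and d2: "\<And>q. dist q p < d2 \<Longrightarrow> \<bar>Du (Dv f) q - Du (Dv f) p\<bar> < e"
    using \<open>e > 0\<close> unfolding continuous_at_eps_delta dist_real_def by metis
  obtain d0 where "d0 > 0" "ball p d0 \<subseteq> U" using assms(1,2) open_contains_ball by blast
  define m where "m = min d0 (min d1 d2)"
  define h where "h = m / 3"
  have "h > 0" using \<open>d0 > 0\<close> \<open>d1 > 0\<close> \<open>d2 > 0\<close> by (simp add: h_def m_def)
  have near: "dist (r, t) p < m"
    if "a \<le> r" "r \<le> a + h" "b \<le> t" "t \<le> b + h" for r t
  proof -
    have "dist (r, t) p \<le> \<bar>r - a\<bar> + \<bar>t - b\<bar>"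
      using norm_Pair_le[of "r - a" "t - b"] by (simp add: p dist_norm)
    also have "\<dots> < m" using that \<open>h > 0\<close> by (simp add: h_def)
    finally show ?thesis .
  qed
  have square: "(r, t) \<in> U" if "a \<le> r" "r \<le> a + h" "b \<le> t" "t \<le> b + h" for r t
    using near[OF that] \<open>ball p d0 \<subseteq> U\<close> by (auto simp: dist_commute m_def)
  obtain r1 t1 where 1: "a < r1" "r1 < a + h" "b < t1" "t1 < b + h"
    "f (a + h, b + h) - f (a + h, b) - f (a, b + h) + f (a, b) = h * h * Dv (Du f) (r1, t1)"
    using second_difference_Dv_Du[OF assms(1,3) \<open>h > 0\<close> square] by blast
  obtain r2 t2 where 2: "a < r2" "r2 < a + h" "b < t2" "t2 < b + h"
    "f (a + h, b + h) - f (a + h, b) - f (a, b + h) + f (a, b) = h * h * Du (Dv f) (r2, t2)"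
    using second_difference_Du_Dv[OF assms(1,3) \<open>h > 0\<close> square] by blast
  have "Dv (Du f) (r1, t1) = Du (Dv f) (r2, t2)" using 1(5) 2(5) \<open>h > 0\<close> by simp
  moreover have "\<bar>Dv (Du f) (r1, t1) - Dv (Du f) p\<bar> < e" using d1 near 1 by (force simp: m_def)
  moreover have "\<bar>Du (Dv f) (r2, t2) - Du (Dv f) p\<bar> < e" using d2 near 2 by (force simp: m_def)
  ultimately show False unfolding e_def by (simp add: abs_real_def split: if_splits)
qed

lemma ip_sym: "ip w z = ip z w"
  by (simp add: ip_def algebra_simps)

lemma ip_add_left: "ip (a + b) c = ip a c + ip b c"
  and ip_diff_left: "ip (a - b) c = ip a c - ip b c"
  and ip_scaleR_left: "ip (r *\<^sub>R a) c = r * ip a c"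
  and ip_uminus_left: "ip (- a) c = - ip a c"
  and ip_zero_left: "ip 0 c = 0"
  and ip_add_right: "ip c (a + b) = ip c a + ip c b"
  and ip_diff_right: "ip c (a - b) = ip c a - ip c b"
  and ip_scaleR_right: "ip c (r *\<^sub>R a) = r * ip c a"
  and ip_uminus_right: "ip c (- a) = - ip c a"
  and ip_zero_right: "ip c 0 = 0"
  by (simp_all add: ip_def algebra_simps)

lemmas ip_simps = ip_add_left ip_diff_left ip_scaleR_left ip_uminus_left ip_zero_left
  ip_add_right ip_diff_right ip_scaleR_right ip_uminus_right ip_zero_right

lemma bounded_bilinear_ip: "bounded_bilinear ip"
  unfolding bilinear_conv_bounded_bilinear[symmetric] bilinear_def
  by (auto simp: ip_simps intro!: linearI)

lemma smooth_on_ip: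
  fixes f g :: "'a::euclidean_space \<Rightarrow> real^4"
  shows "open U \<Longrightarrow> smooth_on U f \<Longrightarrow> smooth_on U g \<Longrightarrow> smooth_on U (\<lambda>p. ip (f p) (g p))"
  by (rule smooth_on_bilinear[OF _ bounded_bilinear_ip])

lemma ip_nondegenerate:
  assumes "\<And>w. ip v w = 0"
  shows "v = 0"
proof -
  have "ip v (axis 1 1) = v$1" "ip v (axis 2 1) = v$2" "ip v (axis 3 1) = - v$3" "ip v (axis 4 1) = - v$4"
    by (simp_all add: ip_def axis_def)
  then show ?thesis using assms by (simp add: vec_eq_iff forall_4)
qed

lemma orthogonal_null_frame_eq_0:
  fixes e1 e2 n1 n2 v :: "real^4"
  assumes indep: "\<And>a b. a *\<^sub>R e1 + b *\<^sub>R e2 = 0 \<Longrightarrow> a = 0 \<and> b = 0"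
    and normal: "ip n1 e1 = 0" "ip n1 e2 = 0" "ip n2 e1 = 0" "ip n2 e2 = 0"
    and null: "ip n1 n1 = 0" and "ip n1 n2 \<noteq> 0"
    and v: "ip v e1 = 0" "ip v e2 = 0" "ip v n1 = 0" "ip v n2 = 0"
  shows "v = 0"
proof -
  define L where "L c = c$1 *\<^sub>R e1 + c$2 *\<^sub>R e2 + c$3 *\<^sub>R n1 + c$4 *\<^sub>R n2" for c :: "real^4"
  have "linear L" unfolding L_def by (rule linearI) (simp_all add: algebra_simps)
  moreover have "inj L"
    unfolding linear_injective_0[OF \<open>linear L\<close>]
  proof (intro allI impI)
    fix c assume c: "L c = 0"
    have "ip (L c) n1 = c$4 * ip n2 n1"
      using normal null by (simp add: L_def ip_simps ip_sym[of e1] ip_sym[of e2])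
    then have c4: "c$4 = 0" using c \<open>ip n1 n2 \<noteq> 0\<close> by (simp add: ip_sym[of n2] ip_simps)
    have "ip (L c) n2 = c$3 * ip n1 n2"
      using normal c4 by (simp add: L_def ip_simps ip_sym[of e1] ip_sym[of e2])
    then have c3: "c$3 = 0" using c \<open>ip n1 n2 \<noteq> 0\<close> by (simp add: ip_simps)
    have "c$1 = 0" "c$2 = 0" using indep c c3 c4 by (simp_all add: L_def)
    then show "c = 0" using c3 c4 by (simp add: vec_eq_iff forall_4)
  qed
  ultimately have "surj L" by (simp add: linear_injective_imp_surjective)
  show ?thesis
  proof (rule ip_nondegenerate)
    fix w
    obtain c where "w = L c" using \<open>surj L\<close> by (metis surjD)
    then show "ip v w = 0" using v by (simp add: L_def ip_simps)
  qed
qed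

lemma lorentz_surface_open: "lorentz_surface x U \<Longrightarrow> open U"
  and lorentz_surface_smooth: "lorentz_surface x U \<Longrightarrow> smooth_on U x"
  and lorentz_surface_gdet_nonzero: "lorentz_surface x U \<Longrightarrow> p \<in> U \<Longrightarrow> gdet x p \<noteq> 0"
  and lorentz_surface_immersion:
    "lorentz_surface x U \<Longrightarrow> p \<in> U \<Longrightarrow> a *\<^sub>R Du x p + b *\<^sub>R Dv x p = 0 \<Longrightarrow> a = 0 \<and> b = 0"
  unfolding lorentz_surface_def by force+

lemma inverse_2x2_solves:
  fixes a b c A B :: real
  assumes "a * c - b\<^sup>2 \<noteq> 0"
  defines "d \<equiv> a * c - b\<^sup>2"
  shows "(c / d * A + - b / d * B) * a + (- b / d * A + a / d * B) * b = A"
    and "(c / d * A + - b / d * B) * b + (- b / d * A + a / d * B) * c = B"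
proof -
  have "d \<noteq> 0" using assms by simp
  then show "(c / d * A + - b / d * B) * a + (- b / d * A + a / d * B) * b = A"
      "(c / d * A + - b / d * B) * b + (- b / d * A + a / d * B) * c = B"
    by (simp_all add: field_simps) (simp_all add: d_def algebra_simps power2_eq_square)
qed

lemma ip_tanp_Du: "gdet x p \<noteq> 0 \<Longrightarrow> ip (tanp x p w) (Du x p) = ip w (Du x p)"
  and ip_tanp_Dv: "gdet x p \<noteq> 0 \<Longrightarrow> ip (tanp x p w) (Dv x p) = ip w (Dv x p)"
  using inverse_2x2_solves[of "g11 x p" "g22 x p" "g12 x p" "ip w (Du x p)" "ip w (Dv x p)"]
  by (simp_all add: tanp_def ip_simps ip_sym[of "Dv x p" "Du x p"] gi11_def gi12_def gi22_def
      g11_def[symmetric] g12_def[symmetric] g22_def[symmetric] gdet_def)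

lemma ip_norp_Du: "gdet x p \<noteq> 0 \<Longrightarrow> ip (norp x p w) (Du x p) = 0"
  and ip_norp_Dv: "gdet x p \<noteq> 0 \<Longrightarrow> ip (norp x p w) (Dv x p) = 0"
  by (simp_all add: norp_def ip_simps ip_tanp_Du ip_tanp_Dv)

lemma norp_eq_self_iff:
  assumes "gdet x p \<noteq> 0"
  shows "norp x p n = n \<longleftrightarrow> ip n (Du x p) = 0 \<and> ip n (Dv x p) = 0"
proof
  assume "norp x p n = n"
  then show "ip n (Du x p) = 0 \<and> ip n (Dv x p) = 0"
    using ip_norp_Du[OF assms, of n] ip_norp_Dv[OF assms, of n] by simp
qed (simp add: norp_def tanp_def)

lemma norp_norp: "gdet x p \<noteq> 0 \<Longrightarrow> norp x p (norp x p w) = norp x p w"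
  by (simp add: norp_eq_self_iff ip_norp_Du ip_norp_Dv)

lemma ip_norp_left:
  assumes "gdet x p \<noteq> 0" "norp x p n = n"
  shows "ip (norp x p w) n = ip w n"
proof -
  have "ip (Du x p) n = 0" "ip (Dv x p) n = 0"
    using assms by (simp_all add: norp_eq_self_iff ip_sym[of _ n])
  then show ?thesis by (simp add: norp_def tanp_def ip_simps)
qed

lemma norp_add: "norp x p (a + b) = norp x p a + norp x p b"
  and norp_diff: "norp x p (a - b) = norp x p a - norp x p b"
  and norp_scaleR: "norp x p (r *\<^sub>R a) = r *\<^sub>R norp x p a"
  and norp_zero: "norp x p 0 = 0"
  by (simp_all add: norp_def tanp_def ip_simps algebra_simps)

lemma normal_vector_eq_0:
  assumes "lorentz_surface x U" "p \<in> U"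
    and normal: "norp x p n1 = n1" "norp x p n2 = n2" "norp x p v = v"
    and "ip n1 n1 = 0" "ip n1 n2 \<noteq> 0" "ip v n1 = 0" "ip v n2 = 0"
  shows "v = 0"
  using lorentz_surface_immersion[OF assms(1,2)] normal assms(6-)
    norp_eq_self_iff[OF lorentz_surface_gdet_nonzero[OF assms(1,2)]]
  by (intro orthogonal_null_frame_eq_0[of "Du x p" "Dv x p" n1 n2 v]) auto

lemma smooth_on_inverse_metric:
  assumes "lorentz_surface x U"
  shows "smooth_on U (gi11 x)" "smooth_on U (gi12 x)" "smooth_on U (gi22 x)"
proof -
  have U: "open U" and nz: "\<And>q. q \<in> U \<Longrightarrow> gdet x q \<noteq> 0"
    using assms lorentz_surface_open lorentz_surface_gdet_nonzero by blast+
  have su: "smooth_on U (Du x)" and sv: "smooth_on U (Dv x)"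
    using assms lorentz_surface_smooth smooth_on_Du smooth_on_Dv by blast+
  have g: "smooth_on U (g11 x)" "smooth_on U (g12 x)" "smooth_on U (g22 x)"
    unfolding g11_def[abs_def] g12_def[abs_def] g22_def[abs_def]
    by (intro smooth_on_ip U su sv)+
  then have "smooth_on U (gdet x)"
    unfolding gdet_def[abs_def] power2_eq_square by (intro smooth_on_diff smooth_on_mult U)
  then show "smooth_on U (gi11 x)" "smooth_on U (gi12 x)" "smooth_on U (gi22 x)"
    unfolding gi11_def[abs_def] gi12_def[abs_def] gi22_def[abs_def]
    using g by (auto intro!: smooth_on_divide U nz smooth_on_uminus)
qed

lemma smooth_on_norp:
  assumes "lorentz_surface x U" "smooth_on U f"
  shows "smooth_on U (\<lambda>q. norp x q (f q))"
proof -
  have U: "open U" using assms lorentz_surface_open by blast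
  have su: "smooth_on U (Du x)" and sv: "smooth_on U (Dv x)"
    using assms lorentz_surface_smooth smooth_on_Du smooth_on_Dv by blast+
  show ?thesis
    unfolding norp_def tanp_def
    by (intro smooth_on_diff smooth_on_add smooth_on_scaleR smooth_on_mult smooth_on_ip
        smooth_on_inverse_metric[OF assms(1)] U assms(2) su sv)
qed

section \<open>The normal connection and its curvature\<close>

definition Dd :: "real \<times> real \<Rightarrow> (real \<times> real \<Rightarrow> 'b::real_normed_vector) \<Rightarrow> real \<times> real \<Rightarrow> 'b" where
  "Dd i f p = frechet_derivative f (at p) i"

definition Dn :: "(real \<times> real \<Rightarrow> real^4) \<Rightarrow> real \<times> real \<Rightarrow> (real \<times> real \<Rightarrow> real^4) \<Rightarrow> real \<times> real \<Rightarrow> real^4" where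
  "Dn x i \<xi> p = norp x p (Dd i \<xi> p)"

lemma Du_eq_Dd: "Du f = Dd (1, 0) f"
  and Dv_eq_Dd: "Dv f = Dd (0, 1) f"
  by (simp_all add: fun_eq_iff Du_def Dv_def Dd_def)

lemma Dnu_eq_Dn: "Dnu x \<xi> = Dn x (1, 0) \<xi>"
  and Dnv_eq_Dn: "Dnv x \<xi> = Dn x (0, 1) \<xi>"
  by (simp_all add: fun_eq_iff Dnu_def Dnv_def Dn_def Du_eq_Dd Dv_eq_Dd)

lemma RD_eq_Dn: "RD x \<xi> p = Dn x (1, 0) (Dn x (0, 1) \<xi>) p - Dn x (0, 1) (Dn x (1, 0) \<xi>) p"
  by (simp add: RD_def Dnu_eq_Dn Dnv_eq_Dn)

lemma Dd_cong:
  assumes "open U" "p \<in> U" "\<And>q. q \<in> U \<Longrightarrow> f q = g q"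
  shows "Dd i f p = Dd i g p"
  unfolding Dd_def using frechet_derivative_cong_open[OF assms] by simp

lemma normal_field_Dn:
  assumes "lorentz_surface x U" "smooth_on U \<xi>" "i \<in> Basis"
  shows "normal_field x U (Dn x i \<xi>)"
  unfolding normal_field_def Dn_def[abs_def] Dd_def
  using smooth_on_norp[OF assms(1) smooth_on_partial[OF assms(2,3)]]
    norp_norp lorentz_surface_gdet_nonzero[OF assms(1)] by blast

lemma Dd_ip_normal_field:
  assumes "lorentz_surface x U" "normal_field x U \<xi>" "normal_field x U \<eta>" "q \<in> U"
  shows "Dd i (\<lambda>q. ip (\<xi> q) (\<eta> q)) q = ip (\<xi> q) (Dn x i \<eta> q) + ip (Dn x i \<xi> q) (\<eta> q)"
proof -
  have U: "open U" and gd: "gdet x q \<noteq> 0"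
    using assms lorentz_surface_open lorentz_surface_gdet_nonzero by blast+
  have \<xi>: "smooth_on U \<xi>" "norp x q (\<xi> q) = \<xi> q" and \<eta>: "smooth_on U \<eta>" "norp x q (\<eta> q) = \<eta> q"
    using assms(2,3,4) by (auto simp: normal_field_def)
  have "Dd i (\<lambda>q. ip (\<xi> q) (\<eta> q)) q = ip (\<xi> q) (Dd i \<eta> q) + ip (Dd i \<xi> q) (\<eta> q)"
    unfolding Dd_def using smooth_on_differentiable[OF U assms(4)] \<xi> \<eta>
    by (intro frechet_derivative_bilinear bounded_bilinear_ip) auto
  also have "\<dots> = ip (\<xi> q) (Dn x i \<eta> q) + ip (Dn x i \<xi> q) (\<eta> q)"
    using ip_norp_left[OF gd \<xi>(2)] ip_norp_left[OF gd \<eta>(2)]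
    by (simp add: Dn_def ip_sym[of "\<xi> q"])
  finally show ?thesis .
qed

lemma Dd_Dd_ip_normal_field:
  assumes L: "lorentz_surface x U" and \<xi>: "normal_field x U \<xi>" and \<eta>: "normal_field x U \<eta>"
    and "p \<in> U" "i \<in> Basis"
  shows "Dd j (Dd i (\<lambda>q. ip (\<xi> q) (\<eta> q))) p =
    ip (\<xi> p) (Dn x j (Dn x i \<eta>) p) + ip (Dn x j \<xi> p) (Dn x i \<eta> p)
    + (ip (Dn x i \<xi> p) (Dn x j \<eta> p) + ip (Dn x j (Dn x i \<xi>) p) (\<eta> p))"
proof -
  have U: "open U" using L lorentz_surface_open by blast
  have \<xi>i: "normal_field x U (Dn x i \<xi>)" and \<eta>i: "normal_field x U (Dn x i \<eta>)"
    using normal_field_Dn[OF L _ \<open>i \<in> Basis\<close>] \<xi> \<eta> by (auto simp: normal_field_def)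
  have smooth: "smooth_on U (\<lambda>q. ip (\<xi> q) (Dn x i \<eta> q))" "smooth_on U (\<lambda>q. ip (Dn x i \<xi> q) (\<eta> q))"
    using \<xi> \<eta> \<xi>i \<eta>i by (auto simp: normal_field_def intro!: smooth_on_ip U)
  have "Dd j (Dd i (\<lambda>q. ip (\<xi> q) (\<eta> q))) p
      = Dd j (\<lambda>q. ip (\<xi> q) (Dn x i \<eta> q) + ip (Dn x i \<xi> q) (\<eta> q)) p"
    using Dd_ip_normal_field[OF L \<xi> \<eta>] by (intro Dd_cong[OF U \<open>p \<in> U\<close>])
  also have "\<dots> = Dd j (\<lambda>q. ip (\<xi> q) (Dn x i \<eta> q)) p + Dd j (\<lambda>q. ip (Dn x i \<xi> q) (\<eta> q)) p"
    unfolding Dd_def using smooth_on_differentiable[OF U \<open>p \<in> U\<close>] smooth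
    by (intro frechet_derivative_add) auto
  finally show ?thesis
    using Dd_ip_normal_field[OF L \<xi> \<eta>i \<open>p \<in> U\<close>] Dd_ip_normal_field[OF L \<xi>i \<eta> \<open>p \<in> U\<close>] by simp
qed

lemma ip_RD_skew:
  assumes L: "lorentz_surface x U" and \<xi>: "normal_field x U \<xi>" and \<eta>: "normal_field x U \<eta>"
    and "p \<in> U"
  shows "ip (RD x \<xi> p) (\<eta> p) + ip (\<xi> p) (RD x \<eta> p) = 0"
proof -
  have U: "open U" using L lorentz_surface_open by blast
  have "smooth_on U (\<lambda>q. ip (\<xi> q) (\<eta> q))"
    using \<xi> \<eta> by (auto simp: normal_field_def intro!: smooth_on_ip U)
  from Dv_Du_eq_Du_Dv[OF U \<open>p \<in> U\<close> this]
  have "Dd (0, 1) (Dd (1, 0) (\<lambda>q. ip (\<xi> q) (\<eta> q))) p = Dd (1, 0) (Dd (0, 1) (\<lambda>q. ip (\<xi> q) (\<eta> q))) p"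
    by (simp add: Du_eq_Dd Dv_eq_Dd)
  then show ?thesis
    using Dd_Dd_ip_normal_field[OF L \<xi> \<eta> \<open>p \<in> U\<close>, of "(1, 0)" "(0, 1)"]
      Dd_Dd_ip_normal_field[OF L \<xi> \<eta> \<open>p \<in> U\<close>, of "(0, 1)" "(1, 0)"]
    by (simp add: RD_eq_Dn ip_simps Basis_prod_def ip_sym[of "Dn x _ \<eta> p"])
qed

lemma norp_RD: "lorentz_surface x U \<Longrightarrow> p \<in> U \<Longrightarrow> norp x p (RD x \<xi> p) = RD x \<xi> p"
  by (simp add: RD_def Dnu_def Dnv_def norp_diff norp_norp lorentz_surface_gdet_nonzero)

lemma RD_eq_0_if_parallel:
  assumes "lorentz_surface x U" "\<And>q. q \<in> U \<Longrightarrow> Dnu x \<xi> q = 0 \<and> Dnv x \<xi> q = 0" "p \<in> U"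
  shows "RD x \<xi> p = 0"
proof -
  have U: "open U" using assms(1) lorentz_surface_open by blast
  have "Du (Dnv x \<xi>) p = 0" "Dv (Dnu x \<xi>) p = 0"
    using Dd_cong[OF U assms(3), of "Dnv x \<xi>" "\<lambda>q. 0" "(1, 0)"]
      Dd_cong[OF U assms(3), of "Dnu x \<xi>" "\<lambda>q. 0" "(0, 1)"] assms(2)
    by (simp_all add: Du_eq_Dd Dv_eq_Dd Dd_def)
  then show ?thesis by (simp add: RD_def Dnu_def Dnv_def norp_zero)
qed

lemma normal_field_norp_const:
  assumes "lorentz_surface x U"
  shows "normal_field x U (\<lambda>q. norp x q w)"
  using smooth_on_norp[OF assms smooth_on_const] norp_norp lorentz_surface_gdet_nonzero[OF assms]
  by (simp add: normal_field_def)

lemma normal_field_meancurv: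
  assumes L: "lorentz_surface x U"
  shows "normal_field x U (meancurv x)"
proof -
  have U: "open U" and x: "smooth_on U x"
    using L lorentz_surface_open lorentz_surface_smooth by blast+
  have "smooth_on U (h11 x)" "smooth_on U (h12 x)" "smooth_on U (h22 x)"
    unfolding h11_def[abs_def] h12_def[abs_def] h22_def[abs_def]
    by (intro smooth_on_norp[OF L] smooth_on_Du smooth_on_Dv x)+
  then have "smooth_on U (meancurv x)"
    unfolding meancurv_def[abs_def]
    by (intro smooth_on_scaleR smooth_on_add smooth_on_mult smooth_on_const
        smooth_on_inverse_metric[OF L] U)
  moreover have "norp x p (meancurv x p) = meancurv x p" if "p \<in> U" for p
    using lorentz_surface_gdet_nonzero[OF L that]
    by (simp add: meancurv_def norp_add norp_scaleR h11_def h12_def h22_def norp_norp)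
  ultimately show ?thesis unfolding normal_field_def by blast
qed

theorem lemma3p1:
  fixes x :: "real \<times> real \<Rightarrow> real^4" and U :: "(real \<times> real) set"
  assumes "lorentz_surface x U"
      and "quasi_minimal x U"
      and "parallel_mean_curvature x U"
  shows "flat_normal_connection x U"
  unfolding flat_normal_connection_def
proof (intro allI impI ballI)
  fix \<xi> p assume \<xi>: "normal_field x U \<xi>" and p: "p \<in> U"
  define H where "H = meancurv x"
  have H: "normal_field x U H" using normal_field_meancurv[OF assms(1)] by (simp add: H_def)
  have "H p \<noteq> 0" and null: "ip (H p) (H p) = 0" using assms(2) p by (auto simp: quasi_minimal_def H_def)
  then obtain w where "ip (H p) w \<noteq> 0" using ip_nondegenerate by blast
  define \<eta> where "\<eta> q = norp x q w" for q
  have \<eta>: "normal_field x U \<eta>" using normal_field_norp_const[OF assms(1)] by (simp add: \<eta>_def[abs_def])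
  have normal: "norp x p (\<zeta> p) = \<zeta> p" if "normal_field x U \<zeta>" for \<zeta>
    using that p by (simp add: normal_field_def)
  have "ip (H p) (\<eta> p) \<noteq> 0"
    using \<open>ip (H p) w \<noteq> 0\<close> ip_norp_left[OF lorentz_surface_gdet_nonzero[OF assms(1) p] normal[OF H]]
    by (simp add: \<eta>_def ip_sym[of "H p"])
  have "RD x H p = 0"
    using RD_eq_0_if_parallel[OF assms(1) _ p] assms(3) by (simp add: parallel_mean_curvature_def H_def)
  then have RD_perp_H: "ip (RD x \<zeta> p) (H p) = 0" if "normal_field x U \<zeta>" for \<zeta>
    using ip_RD_skew[OF assms(1) that H p] by (simp add: ip_simps)
  note RD_vanishes = normal_vector_eq_0[OF assms(1) p normal[OF H] normal[OF \<eta>] norp_RD[OF assms(1) p]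
      null \<open>ip (H p) (\<eta> p) \<noteq> 0\<close> RD_perp_H]
  have "RD x \<eta> p = 0"
    using RD_vanishes[OF \<eta>] ip_RD_skew[OF assms(1) \<eta> \<eta> p] by (simp add: ip_sym[of "\<eta> p"])
  then show "RD x \<xi> p = 0"
    using RD_vanishes[OF \<xi>] ip_RD_skew[OF assms(1) \<xi> \<eta> p] by (simp add: ip_simps)
qed

end
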